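(* Let $S$ be a solid and let $x,y\in S^*$. If $e(x)y\le e(y)x$, then $R(x)\le R(y)$.
   Context: A solid is a set $S$ with two binary operations $+$ and $\cdot$ (written $xy$) and a binary relation $\le$ satisfying the following axioms (all variables range over $S$). (A1) $+$ is associative and commutative. (A2) For each $x$ there is $e$ with $x+e=x$ such that $e+f=e$ for every $f$ with $x+f=x$; this $e$ is unique and is denoted $e(x)$ (the magnitude of $x$). An element $x$ with $x=e(x)$ is called a magnitude. (A3) For each $x$ there is $s$ with $x+s=e(x)$ and $e(s)=e(x)$; it is unique and denoted $-x$; write $x-y$ for $x+(-y)$. (A4) $e(x+y)=e(x)$ or $e(x+y)=e(y)$. (M1) $\cdot$ is associative and commutative. (M2) For each $x\neq e(x)$ there is $u$ with $xu=x$ such that $uv=u$ for every $v$ with $xv=x$; it is unique and denoted $u(x)$. (M3) For each $x\ne e(x)$ there is $d$ with $xd=u(x)$ and $u(d)=u(x)$; it is unique and denoted $x^{-1}$; write $y/x$ for $yx^{-1}$. (M4) If $x\neq e(x)$ and $y\ne e(y)$ then $u(xy)=u(x)$ or $u(xy)=u(y)$. (O1) $\le$ is a total order (reflexive, antisymmetric, transitive, total); $x<y$ means $x\le y$ and $x\ne y$. (O2) $x\le y\Rightarrow x+z\le y+z$. (O3) $y+e(x)=e(x)\Rightarrow (y\le e(x)$ and $-y\le e(x))$. (O4) $(e(x)<x$ and $y\le z)\Rightarrow xy\le xz$. (O5) $e(y)\le y\le z\Rightarrow e(x)y\le e(x)z$. (AM1) For all $x,y$ there is $z$ with $e(x)y=e(z)$.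 (AM2) $e(xy)=e(x)y+e(y)x$. (AM3) If $x\ne e(x)$ then $e(u(x))=e(x)/x$. (AM4) (distributivity axiom) $xy+xz=x(y+z)+e(x)y+e(x)z$. (AM5) $-(xy)=(-x)y$. (E1) There is $m$ with $m+x=x$ for all $x$; it is unique, called zero and denoted $0$. (E2) There is $u$ with $ux=x$ for all $x$; it is unique, called one and denoted $1$. (E3) There is $M$ with $e(x)+M=M$ for all $x$. (E4) There is $x$ with $e(x)\ne 0$ and $e(x)\ne M$. (E5) For every $x$ there is $a$ with $x=a+e(x)$ and $e(a)=0$. (E6) If $x,y$ are magnitudes with $x<y$, there is $z$ with $z\ne e(z)$ and $x<z<y$. Further notation: $S^*=\{x\in S: x\ne e(x)\}$ (zeroless elements). $x$ is positive if $e(x)\le x$ and negative if $x<e(x)$; $|x|=x$ if $x$ is positive and $|x|=-x$ if $x$ is negative. $x$ is precise if $e(x)=0$. The relative uncertainty $R(x)$ is $e(u(x))$ if $x\ne e(x)$, and $M$ (from (E3)) if $x=e(x)$. *)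

theory Defs
  imports Main
begin

text \<open>A solid is modelled on the whole of a type 'a, with addition ad,
 multiplication mu and order le given as parameters.\<close>

definition mag :: "('a \<Rightarrow> 'a \<Rightarrow> 'a) \<Rightarrow> 'a \<Rightarrow> 'a" where
  "mag ad x = (THE e. ad x e = x \<and> (\<forall>f. ad x f = x \<longrightarrow> ad e f = e))"

definition neg :: "('a \<Rightarrow> 'a \<Rightarrow> 'a) \<Rightarrow> 'a \<Rightarrow> 'a" where
  "neg ad x = (THE s. ad x s = mag ad x \<and> mag ad s = mag ad x)"

definition unt :: "('a \<Rightarrow> 'a \<Rightarrow> 'a) \<Rightarrow> 'a \<Rightarrow> 'a" where
  "unt mu x = (THE u. mu x u = x \<and> (\<forall>v. mu x v = x \<longrightarrow> mu u v = u))"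

definition inv :: "('a \<Rightarrow> 'a \<Rightarrow> 'a) \<Rightarrow> 'a \<Rightarrow> 'a" where
  "inv mu x = (THE d. mu x d = unt mu x \<and> unt mu d = unt mu x)"

definition zero_s :: "('a \<Rightarrow> 'a \<Rightarrow> 'a) \<Rightarrow> 'a" where
  "zero_s ad = (THE m. \<forall>x. ad m x = x)"

text \<open>The largest magnitude M of axiom (E3) (taken to be a magnitude, which makes it unique).\<close>
definition bigM :: "('a \<Rightarrow> 'a \<Rightarrow> 'a) \<Rightarrow> 'a" where
  "bigM ad = (THE M. mag ad M = M \<and> (\<forall>x. ad (mag ad x) M = M))"

definition relunc :: "('a \<Rightarrow> 'a \<Rightarrow> 'a) \<Rightarrow> ('a \<Rightarrow> 'a \<Rightarrow> 'a) \<Rightarrow> 'a \<Rightarrow> 'a" where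
  "relunc ad mu x = (if x \<noteq> mag ad x then mag ad (unt mu x) else bigM ad)"

definition solid :: "('a \<Rightarrow> 'a \<Rightarrow> 'a) \<Rightarrow> ('a \<Rightarrow> 'a \<Rightarrow> 'a) \<Rightarrow> ('a \<Rightarrow> 'a \<Rightarrow> bool) \<Rightarrow> bool" where
  "solid ad mu le \<longleftrightarrow>
    \<comment> \<open>A1\<close>
    (\<forall>x y z. ad (ad x y) z = ad x (ad y z)) \<and> (\<forall>x y. ad x y = ad y x) \<and>
    \<comment> \<open>A2\<close>
    (\<forall>x. \<exists>!e. ad x e = x \<and> (\<forall>f. ad x f = x \<longrightarrow> ad e f = e)) \<and>
    \<comment> \<open>A3\<close>
    (\<forall>x. \<exists>!s. ad x s = mag ad x \<and> mag ad s = mag ad x) \<and>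
    \<comment> \<open>A4\<close>
    (\<forall>x y. mag ad (ad x y) = mag ad x \<or> mag ad (ad x y) = mag ad y) \<and>
    \<comment> \<open>M1\<close>
    (\<forall>x y z. mu (mu x y) z = mu x (mu y z)) \<and> (\<forall>x y. mu x y = mu y x) \<and>
    \<comment> \<open>M2\<close>
    (\<forall>x. x \<noteq> mag ad x \<longrightarrow> (\<exists>!u. mu x u = x \<and> (\<forall>v. mu x v = x \<longrightarrow> mu u v = u))) \<and>
    \<comment> \<open>M3\<close>
    (\<forall>x. x \<noteq> mag ad x \<longrightarrow> (\<exists>!d. mu x d = unt mu x \<and> unt mu d = unt mu x)) \<and>
    \<comment> \<open>M4\<close>
    (\<forall>x y. x \<noteq> mag ad x \<longrightarrow> y \<noteq> mag ad y \<longrightarrow>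
        unt mu (mu x y) = unt mu x \<or> unt mu (mu x y) = unt mu y) \<and>
    \<comment> \<open>O1\<close>
    (\<forall>x. le x x) \<and> (\<forall>x y. le x y \<longrightarrow> le y x \<longrightarrow> x = y) \<and>
    (\<forall>x y z. le x y \<longrightarrow> le y z \<longrightarrow> le x z) \<and> (\<forall>x y. le x y \<or> le y x) \<and>
    \<comment> \<open>O2\<close>
    (\<forall>x y z. le x y \<longrightarrow> le (ad x z) (ad y z)) \<and>
    \<comment> \<open>O3\<close>
    (\<forall>x y. ad y (mag ad x) = mag ad x \<longrightarrow> le y (mag ad x) \<and> le (neg ad y) (mag ad x)) \<and>
    \<comment> \<open>O4\<close>
    (\<forall>x y z. le (mag ad x) x \<and> mag ad x \<noteq> x \<and> le y z \<longrightarrow> le (mu x y) (mu x z)) \<and>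
    \<comment> \<open>O5\<close>
    (\<forall>x y z. le (mag ad y) y \<and> le y z \<longrightarrow> le (mu (mag ad x) y) (mu (mag ad x) z)) \<and>
    \<comment> \<open>AM1\<close>
    (\<forall>x y. \<exists>z. mu (mag ad x) y = mag ad z) \<and>
    \<comment> \<open>AM2\<close>
    (\<forall>x y. mag ad (mu x y) = ad (mu (mag ad x) y) (mu (mag ad y) x)) \<and>
    \<comment> \<open>AM3\<close>
    (\<forall>x. x \<noteq> mag ad x \<longrightarrow> mag ad (unt mu x) = mu (mag ad x) (inv mu x)) \<and>
    \<comment> \<open>AM4\<close>
    (\<forall>x y z. ad (mu x y) (mu x z) = ad (ad (mu x (ad y z)) (mu (mag ad x) y)) (mu (mag ad x) z)) \<and>
    \<comment> \<open>AM5\<close>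
    (\<forall>x y. neg ad (mu x y) = mu (neg ad x) y) \<and>
    \<comment> \<open>E1\<close>
    (\<exists>!m. \<forall>x. ad m x = x) \<and>
    \<comment> \<open>E2\<close>
    (\<exists>!u. \<forall>x. mu u x = x) \<and>
    \<comment> \<open>E3\<close>
    (\<exists>M. \<forall>x. ad (mag ad x) M = M) \<and>
    \<comment> \<open>E4 (for any M as in E3)\<close>
    (\<exists>x. mag ad x \<noteq> zero_s ad \<and> (\<forall>M. (\<forall>y. ad (mag ad y) M = M) \<longrightarrow> mag ad x \<noteq> M)) \<and>
    \<comment> \<open>E5\<close>
    (\<forall>x. \<exists>a. x = ad a (mag ad x) \<and> mag ad a = zero_s ad) \<and>
    \<comment> \<open>E6\<close>
    (\<forall>x y. x = mag ad x \<longrightarrow> y = mag ad y \<longrightarrow> le x y \<longrightarrow> x \<noteq> y \<longrightarrow>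
        (\<exists>z. z \<noteq> mag ad z \<and> le x z \<and> z \<noteq> x \<and> le z y \<and> z \<noteq> y))"

end

theory Submission
  imports Defs
begin

text \<open>
  Multiplying by a magnitude does not see the sign, so x and y may be replaced by |x| and |y|.
  Since R(x) |x| = e(x), the hypothesis becomes R(x) |y| |x| \<le> e(y) |x| = R(y) |y| |x|, and it
  remains to cancel the positive zeroless factors |x| and |y|. Against a magnitude, a positive
  zeroless P acts like its precise part p (P = p + e(P), e(p) = 0), and a nonzero positive
  precise p is invertible, p p^-1 = 1: the element d = 1 - u(p) is a precise idempotent
  annihilated by p, and the order axioms force such a d to vanish. This uses e(1) = 0,
  which follows from the density axiom (E6): every w with 0 \<le> w \<le> e(1) is a magnitude.
\<close>

locale solid_struct =
  fixes ad mu :: "'a \<Rightarrow> 'a \<Rightarrow> 'a" and le :: "'a \<Rightarrow> 'a \<Rightarrow> bool"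
  assumes add_assoc: "\<And>x y z. ad (ad x y) z = ad x (ad y z)"
    and add_commute: "\<And>x y. ad x y = ad y x"
    and mag_ex1: "\<And>x. \<exists>!e. ad x e = x \<and> (\<forall>f. ad x f = x \<longrightarrow> ad e f = e)"
    and neg_ex1: "\<And>x. \<exists>!s. ad x s = mag ad x \<and> mag ad s = mag ad x"
    and mag_add: "\<And>x y. mag ad (ad x y) = mag ad x \<or> mag ad (ad x y) = mag ad y"
    and mult_assoc: "\<And>x y z. mu (mu x y) z = mu x (mu y z)"
    and mult_commute: "\<And>x y. mu x y = mu y x"
    and unit_ex1: "\<And>x. x \<noteq> mag ad x \<Longrightarrow>
      \<exists>!u. mu x u = x \<and> (\<forall>v. mu x v = x \<longrightarrow> mu u v = u)"
    and inverse_ex1: "\<And>x. x \<noteq> mag ad x \<Longrightarrow> \<exists>!d. mu x d = unt mu x \<and> unt mu d = unt mu x"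
    and order_refl: "\<And>x. le x x"
    and order_antisym: "\<And>x y. le x y \<Longrightarrow> le y x \<Longrightarrow> x = y"
    and order_trans: "\<And>x y z. le x y \<Longrightarrow> le y z \<Longrightarrow> le x z"
    and order_total: "\<And>x y. le x y \<or> le y x"
    and add_right_mono: "\<And>x y z. le x y \<Longrightarrow> le (ad x z) (ad y z)"
    and le_mag_if_absorbed: "\<And>x y. ad y (mag ad x) = mag ad x \<Longrightarrow>
      le y (mag ad x) \<and> le (neg ad y) (mag ad x)"
    and mult_left_mono: "\<And>x y z. le (mag ad x) x \<and> mag ad x \<noteq> x \<and> le y z \<Longrightarrow>
      le (mu x y) (mu x z)"
    and mag_mult_left_mono: "\<And>x y z. le (mag ad y) y \<and> le y z \<Longrightarrow>
      le (mu (mag ad x) y) (mu (mag ad x) z)"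
    and mag_mult_is_mag: "\<And>x y. \<exists>z. mu (mag ad x) y = mag ad z"
    and mag_mult: "\<And>x y. mag ad (mu x y) = ad (mu (mag ad x) y) (mu (mag ad y) x)"
    and mag_unit: "\<And>x. x \<noteq> mag ad x \<Longrightarrow> mag ad (unt mu x) = mu (mag ad x) (inv mu x)"
    and distrib: "\<And>x y z. ad (mu x y) (mu x z) =
      ad (ad (mu x (ad y z)) (mu (mag ad x) y)) (mu (mag ad x) z)"
    and neg_mult: "\<And>x y. neg ad (mu x y) = mu (neg ad x) y"
    and zero_ex1: "\<exists>!m. \<forall>x. ad m x = x"
    and one_ex1: "\<exists>!u. \<forall>x. mu u x = x"
    and nonzero_mag_ex: "\<exists>x. mag ad x \<noteq> zero_s ad"
    and precise_part_ex: "\<And>x. \<exists>a. x = ad a (mag ad x) \<and> mag ad a = zero_s ad"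
    and mags_dense: "\<And>x y. x = mag ad x \<Longrightarrow> y = mag ad y \<Longrightarrow> le x y \<Longrightarrow> x \<noteq> y \<Longrightarrow>
      \<exists>z. z \<noteq> mag ad z \<and> le x z \<and> z \<noteq> x \<and> le z y \<and> z \<noteq> y"

lemma solid_struct_if_solid:
  assumes "solid ad mu le"
  shows "solid_struct ad mu le"
  using assms unfolding solid_def solid_struct_def
  by (elim conjE) (intro conjI; (assumption | blast))

context solid_struct
begin

abbreviation E where "E x \<equiv> mag ad x"
abbreviation N where "N x \<equiv> neg ad x"
abbreviation U where "U x \<equiv> unt mu x"
abbreviation I where "I x \<equiv> inv mu x"
abbreviation Z where "Z \<equiv> zero_s ad"

definition one_s :: 'a where "one_s = (THE u. \<forall>x. mu u x = x)"

lemma mag_spec: "ad x (E x) = x \<and> (\<forall>f. ad x f = x \<longrightarrow> ad (E x) f = E x)"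
  unfolding mag_def by (rule theI'[OF mag_ex1])

lemma add_mag: "ad x (E x) = x"
  using mag_spec by blast

lemma mag_absorb: "ad x f = x \<Longrightarrow> ad (E x) f = E x"
  using mag_spec by blast

lemma neg_spec: "ad x (N x) = E x \<and> E (N x) = E x"
  unfolding neg_def by (rule theI'[OF neg_ex1])

lemma add_neg: "ad x (N x) = E x"
  using neg_spec by blast

lemma mag_neg: "E (N x) = E x"
  using neg_spec by blast

lemma neg_unique: "ad x s = E x \<Longrightarrow> E s = E x \<Longrightarrow> N x = s"
  unfolding neg_def by (rule the1_equality[OF neg_ex1]) blast

lemma unit_spec: "x \<noteq> E x \<Longrightarrow> mu x (U x) = x \<and> (\<forall>v. mu x v = x \<longrightarrow> mu (U x) v = U x)"
  unfolding unt_def by (rule theI'[OF unit_ex1])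

lemma mult_unit: "x \<noteq> E x \<Longrightarrow> mu x (U x) = x"
  using unit_spec by blast

lemma unit_absorb: "x \<noteq> E x \<Longrightarrow> mu x v = x \<Longrightarrow> mu (U x) v = U x"
  using unit_spec by blast

lemma mult_inverse: "x \<noteq> E x \<Longrightarrow> mu x (I x) = U x"
  unfolding inv_def using theI'[OF inverse_ex1] by blast

lemma zero_add: "ad Z x = x"
  unfolding zero_s_def by (rule theI'[OF zero_ex1, rule_format])

lemma add_zero: "ad x Z = x"
  using zero_add add_commute by metis

lemma one_mult: "mu one_s x = x"
  unfolding one_s_def by (rule theI'[OF one_ex1, rule_format])

lemma mult_one: "mu x one_s = x"
  using one_mult mult_commute by metis

lemma mag_mag [simp]: "E (E x) = E x"
  unfolding mag_def[of ad "E x"]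
  by (rule the1_equality[OF mag_ex1]) (use add_mag mag_absorb in blast)

lemma mag_zero [simp]: "E Z = Z"
  unfolding mag_def[of ad Z]
  by (rule the1_equality[OF mag_ex1]) (auto simp: zero_add)

lemma add_mag_self: "E m = m \<Longrightarrow> ad m m = m"
  using add_mag by metis

lemma add_mags_cases:
  assumes "E a = a" "E b = b"
  shows "ad a b = a \<or> ad a b = b"
proof -
  have absorbs_b: "ad (ad a b) b = ad a b"
    using add_assoc add_mag_self[OF assms(2)] by metis
  have absorbs_a: "ad (ad a b) a = ad a b"
    using add_assoc add_commute add_mag_self[OF assms(1)] by metis
  from mag_add[of a b] show ?thesis
  proof
    assume "E (ad a b) = E a"
    then show ?thesis using mag_absorb[OF absorbs_b] assms by metis
  next
    assume "E (ad a b) = E b"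
    then show ?thesis using mag_absorb[OF absorbs_a] assms add_commute by metis
  qed
qed

lemma mag_add_mags: "E a = a \<Longrightarrow> E b = b \<Longrightarrow> E (ad a b) = ad a b"
  using add_mags_cases by metis

lemma mag_le_iff:
  assumes "E a = a" "E b = b"
  shows "le a b \<longleftrightarrow> ad a b = b"
proof
  assume "ad a b = b"
  then show "le a b" using le_mag_if_absorbed[of a b] assms by metis
next
  assume "le a b"
  moreover have "ad a b = a \<Longrightarrow> le b a"
    using le_mag_if_absorbed[of b a] assms add_commute by metis
  ultimately show "ad a b = b"
    using add_mags_cases[OF assms] order_antisym add_mag_self[OF assms(1)] by metis
qed

lemma zero_le_mag: "E m = m \<Longrightarrow> le Z m"
  using mag_le_iff[of Z m] zero_add by simp

lemma neg_mag_eq: "E m = m \<Longrightarrow> N m = m"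
  using neg_unique[of m m] add_mag_self by metis

lemma neg_neg: "N (N x) = x"
  using neg_unique[of "N x" x] add_neg add_commute mag_neg by metis

lemma mag_mult_mag: "E m = m \<Longrightarrow> E (mu m y) = mu m y"
  using mag_mult_is_mag[of m y] mag_mag by metis

lemma mag_mult_mag': "E m = m \<Longrightarrow> E (mu y m) = mu y m"
  using mag_mult_mag mult_commute by metis

lemma mult_neg: "mu x (N y) = N (mu x y)"
  using neg_mult mult_commute by metis

lemma mags_add_eq_zero: "E a = a \<Longrightarrow> E b = b \<Longrightarrow> ad a b = Z \<Longrightarrow> a = Z"
  using add_mags_cases add_zero by metis

lemma add_mag_if_between: "E m = m \<Longrightarrow> le Z t \<Longrightarrow> le t m \<Longrightarrow> ad t m = m"
  using add_right_mono[of Z t m] add_right_mono[of t m m] order_antisym add_mag_self zero_add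
  by metis

lemma add_absorbed_by_mag: "ad t (E x) = E x \<Longrightarrow> ad x t = x"
  using add_assoc[of x "E x" t] add_mag add_commute by metis

lemma neg_nonneg_if_nonpos: "le x (E x) \<Longrightarrow> le (E (N x)) (N x)"
  using add_right_mono[of x "E x" "N x"] add_neg mag_neg add_mag add_commute by metis

lemma neg_zeroless: "x \<noteq> E x \<Longrightarrow> N x \<noteq> E (N x)"
  using mag_neg neg_neg neg_mag_eq mag_mag by metis

lemma one_not_mag: "one_s \<noteq> E one_s"
proof
  assume one_mag: "one_s = E one_s"
  have all_mag: "E x = x" for x
    using mag_mult[of one_s x] one_mag one_mult mult_one add_mag by metis
  obtain x0 where "E x0 \<noteq> Z"
    using nonzero_mag_ex by blast
  then obtain w where "w \<noteq> E w"
    using mags_dense[of Z "E x0"] zero_le_mag[of "E x0"] by force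
  with all_mag show False by metis
qed

lemma zero_le_one: "le Z one_s"
proof (rule ccontr)
  assume "\<not> le Z one_s"
  then have one_le: "le one_s Z"
    using order_total by blast
  have mag_le_neg: "le (E one_s) (N one_s)"
    using add_right_mono[OF one_le, of "N one_s"] by (simp add: add_neg zero_add)
  have neg_zeroless: "E (N one_s) \<noteq> N one_s"
    using neg_zeroless[OF one_not_mag] by simp
  have "le (mu (N one_s) one_s) (mu (N one_s) Z)"
    using mult_left_mono[of "N one_s" one_s Z] one_le mag_le_neg neg_zeroless
    by (simp add: mag_neg)
  moreover have "mu (N one_s) Z = Z"
    using neg_mult[of one_s Z] by (simp add: one_mult neg_mag_eq)
  ultimately have "le (N one_s) Z"
    by (simp add: mult_one)
  then have "N one_s = E one_s"
    using mag_le_neg zero_le_mag[of "E one_s"] order_antisym order_trans by (meson mag_mag)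
  then show False
    using neg_zeroless mag_neg by simp
qed

lemma mult_zero_le_mag: "le (mu w Z) (E w)"
proof -
  have "le (mu (E w) Z) (mu (E w) one_s)"
    using mag_mult_left_mono[of Z one_s w] zero_le_one order_refl by simp
  then have "ad (mu (E w) Z) (E w) = E w"
    using mag_le_iff mag_mult_mag mult_one by simp
  then have "ad w (mu (E w) Z) = w"
    by (rule add_absorbed_by_mag)
  then have "ad w (mu w Z) = w"
    using distrib[of w one_s Z] by (simp add: add_zero mult_one add_mag)
  then have "ad (E w) (mu w Z) = E w"
    by (rule mag_absorb)
  then show ?thesis
    using mag_le_iff[of "mu w Z" "E w"] mag_mult_mag' add_commute by simp
qed

lemma precise_mult_zero: "E p = Z \<Longrightarrow> mu p Z = Z"
  using mult_zero_le_mag[of p] zero_le_mag[OF mag_mult_mag'[of Z p]] order_antisym by simp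

lemma zero_mult_precise: "E p = Z \<Longrightarrow> mu Z p = Z"
  using precise_mult_zero mult_commute by metis

lemma mult_mag_one_le_mag: "le (mu w (E one_s)) (E w)"
proof -
  have "mu w (N one_s) = N w" and "mu (E w) (N one_s) = E w"
    using mult_neg mult_one neg_mag_eq mag_mag by metis+
  then have "E w = ad (ad (mu w (E one_s)) (E w)) (E w)"
    using distrib[of w one_s "N one_s"] add_neg mult_one by simp
  then have "E w = ad (mu w (E one_s)) (E w)"
    using add_assoc add_mag_self[OF mag_mag] by simp
  then show ?thesis
    using mag_le_iff[of "mu w (E one_s)" "E w"] mag_mult_mag'[of "E one_s"] by simp
qed

lemma one_precise_part:
  "\<exists>a. one_s = ad a (E one_s) \<and> E a = Z \<and> le Z a \<and> le a one_s \<and> mu a (E one_s) = Z"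
proof -
  obtain a where one_eq: "one_s = ad a (E one_s)" and a_precise: "E a = Z"
    using precise_part_ex by blast
  have "le (mu a (E one_s)) Z"
    using mult_mag_one_le_mag[of a] a_precise by simp
  then have a_mag_one: "mu a (E one_s) = Z"
    using zero_le_mag[OF mag_mult_mag'[of "E one_s" a]] order_antisym by simp
  have a_le_one: "le a one_s"
    using add_right_mono[OF zero_le_mag[of "E one_s"], of a] one_eq
    by (simp add: zero_add add_commute[of "E one_s" a])
  have a_nonneg: "le Z a"
  proof (rule ccontr)
    assume "\<not> le Z a"
    then have "le one_s (E one_s)"
      using order_total add_right_mono[of a Z "E one_s"] one_eq by (metis zero_add)
    then have "ad one_s (E one_s) = E one_s"
      using add_mag_if_between[OF mag_mag zero_le_one] by blast
    then show False
      using add_mag one_not_mag by simp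
  qed
  show ?thesis
    using one_eq a_precise a_nonneg a_le_one a_mag_one by blast
qed

lemma mag_if_between_zero_and_mag_one:
  assumes "le Z w" and "le w (E one_s)"
  shows "E w = w"
proof -
  obtain a where one_eq: "one_s = ad a (E one_s)" and a_precise: "E a = Z"
    and a_nonneg: "le Z a" and a_le_one: "le a one_s" and a_mag_one: "mu a (E one_s) = Z"
    using one_precise_part by blast
  have w_absorbed: "ad w (E one_s) = E one_s"
    using add_mag_if_between[OF mag_mag assms] .
  have "mu a w = ad (mu Z w) (mu Z (E one_s))"
    using distrib[of a w "E one_s"] w_absorbed a_mag_one a_precise by (simp add: add_zero zero_add)
  then have aw_mag: "E (mu a w) = mu a w"
    using mag_add_mags mag_mult_mag[OF mag_zero] by simp
  have "le (mu (E w) a) (mu (E w) one_s)"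
    using mag_mult_left_mono[of a one_s w] a_precise a_nonneg a_le_one by simp
  then have "ad (mu (E w) a) (E w) = E w"
    using mag_le_iff mag_mult_mag mult_one by simp
  then have absorb_a: "ad w (mu (E w) a) = w"
    by (rule add_absorbed_by_mag)
  have "ad (mu (E w) (E one_s)) (E w) = E w"
    using mult_mag_one_le_mag[of "E w"] mag_le_iff mag_mult_mag by simp
  then have absorb_mag_one: "ad w (mu (E w) (E one_s)) = w"
    by (rule add_absorbed_by_mag)
  have "ad (mu w a) (mu w (E one_s)) = w"
    using distrib[of w a "E one_s"] one_eq[symmetric] absorb_a absorb_mag_one by (simp add: mult_one)
  then show ?thesis
    using mag_add_mags aw_mag mult_commute mag_mult_mag'[of "E one_s" w] mag_mag by metis
qed

lemma mag_one: "E one_s = Z"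
proof (rule ccontr)
  assume "E one_s \<noteq> Z"
  then obtain w where "w \<noteq> E w" "le Z w" "le w (E one_s)"
    using mags_dense[of Z "E one_s"] zero_le_mag[of "E one_s"] by auto
  then show False
    using mag_if_between_zero_and_mag_one by simp
qed

lemma zero_mult_inverse_precise:
  assumes "E p = Z" and "p \<noteq> Z"
  shows "mu Z (I p) = Z"
proof -
  have zeroless: "p \<noteq> E p"
    using assms by simp
  have "Z = ad (mu Z (U p)) (mu (E (U p)) p)"
    using mag_mult[of p "U p"] mult_unit[OF zeroless] assms(1) by simp
  then have zero_unit: "mu Z (U p) = Z"
    using mags_add_eq_zero mag_mult_mag[OF mag_zero] mag_mult_mag[OF mag_mag] by metis
  have "mu Z (I p) = mu (mu Z p) (I p)"
    using zero_mult_precise[OF assms(1)] by simp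
  also have "\<dots> = mu Z (U p)"
    using mult_assoc mult_inverse[OF zeroless] by simp
  finally show ?thesis
    using zero_unit by simp
qed

lemma mag_unit_precise: "E p = Z \<Longrightarrow> p \<noteq> Z \<Longrightarrow> E (U p) = Z"
  using mag_unit zero_mult_inverse_precise by simp

lemma precise_square_nonzero:
  assumes "E p = Z" and "p \<noteq> Z"
  shows "mu p p \<noteq> Z"
proof
  assume square_zero: "mu p p = Z"
  have zeroless: "p \<noteq> E p"
    using assms by simp
  have "p = mu p (mu p (I p))"
    using mult_unit[OF zeroless] mult_inverse[OF zeroless] by simp
  also have "\<dots> = Z"
    using mult_assoc square_zero zero_mult_inverse_precise[OF assms] by metis
  finally show False
    using assms(2) by blast
qed

lemma precise_distrib:
  assumes "E x = Z" "E y = Z" "E z = Z"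
  shows "mu x (ad y z) = ad (mu x y) (mu x z)"
  using distrib[of x y z] assms by (simp add: zero_mult_precise add_zero)

lemma precise_idem_nonneg:
  assumes d_precise: "E d = Z" and d_idem: "mu d d = d"
  shows "le Z d"
proof (rule ccontr)
  assume "\<not> le Z d"
  then have d_le: "le d Z" and "d \<noteq> Z"
    using order_total order_refl by blast+
  then have neg_nonzero: "N d \<noteq> Z"
    using neg_neg neg_mag_eq[OF mag_zero] by metis
  have neg_nonneg: "le Z (N d)"
    using add_right_mono[OF d_le, of "N d"] add_neg d_precise by (simp add: zero_add)
  have "le (mu (N d) d) (mu (N d) Z)"
    using mult_left_mono[of "N d" d Z] d_le neg_nonneg neg_nonzero d_precise by (simp add: mag_neg)
  then have "le (N d) Z"
    using neg_mult[of d d] d_idem precise_mult_zero[of "N d"] d_precise by (simp add: mag_neg)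
  then show False
    using neg_nonneg neg_nonzero order_antisym by blast
qed

lemma precise_idem_annihilated_zero:
  assumes p_precise: "E p = Z" and p_nonneg: "le Z p" and p_square: "mu p p \<noteq> Z"
    and d_precise: "E d = Z" and d_idem: "mu d d = d" and annihilated: "mu p d = Z"
  shows "d = Z"
proof (rule ccontr)
  assume "d \<noteq> Z"
  then have d_zeroless: "E d \<noteq> d" and p_zeroless: "E p \<noteq> p"
    using d_precise p_precise p_square precise_mult_zero by auto
  have d_nonneg: "le Z d"
    using precise_idem_nonneg[OF d_precise d_idem] .
  consider "le d p" | "le p d"
    using order_total by blast
  then show False
  proof cases
    case 1
    then have "le (mu d d) (mu d p)"
      using mult_left_mono[of d d p] d_nonneg d_precise d_zeroless by simp
    then have "le d Z"
      using d_idem annihilated mult_commute by metis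
    then show False
      using d_nonneg order_antisym \<open>d \<noteq> Z\<close> by blast
  next
    case 2
    then have "le (mu p p) Z"
      using mult_left_mono[of p p d] p_nonneg p_precise p_zeroless annihilated by simp
    moreover have "le Z (mu p p)"
      using mult_left_mono[of p Z p] p_nonneg p_precise p_zeroless precise_mult_zero by simp
    ultimately show False
      using p_square order_antisym by blast
  qed
qed

lemma unit_precise_nonneg:
  assumes p_precise: "E p = Z" and p_nonzero: "p \<noteq> Z" and p_nonneg: "le Z p"
  shows "U p = one_s"
proof -
  define c where "c = U p"
  define d where "d = ad one_s (N c)"
  have p_zeroless: "p \<noteq> E p"
    using p_precise p_nonzero by simp
  have pc: "mu p c = p"
    unfolding c_def using mult_unit[OF p_zeroless] .
  have cc: "mu c c = c"
    unfolding c_def using unit_absorb[OF p_zeroless pc[unfolded c_def]] .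
  have c_precise: "E c = Z" and nc_precise: "E (N c) = Z"
    unfolding c_def using mag_unit_precise[OF p_precise p_nonzero] mag_neg by simp_all
  have d_precise: "E d = Z"
    unfolding d_def using mag_add[of one_s "N c"] mag_one nc_precise by auto
  have distrib_d: "mu x d = ad x (N (mu x c))" if "E x = Z" for x
    unfolding d_def using precise_distrib[OF that mag_one nc_precise] by (simp add: mult_one mult_neg)
  have pd: "mu p d = Z"
    using distrib_d[OF p_precise] pc add_neg p_precise by simp
  have cd: "mu c d = Z"
    using distrib_d[OF c_precise] cc add_neg c_precise by simp
  have dd: "mu d d = d"
    using distrib_d[OF d_precise] cd mult_commute[of d c] neg_mag_eq[OF mag_zero] by (simp add: add_zero)
  have "d = Z"
    using precise_idem_annihilated_zero[OF p_precise p_nonneg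
        precise_square_nonzero[OF p_precise p_nonzero] d_precise dd pd] .
  moreover have "ad c d = one_s"
    unfolding d_def using add_assoc add_commute add_neg c_precise add_zero by metis
  ultimately show ?thesis
    unfolding c_def by (simp add: add_zero)
qed

lemma inverse_precise_nonneg: "E p = Z \<Longrightarrow> p \<noteq> Z \<Longrightarrow> le Z p \<Longrightarrow> mu p (I p) = one_s"
  using mult_inverse unit_precise_nonneg by simp

lemma positive_precise_part:
  assumes P_pos: "le (E P) P" and P_zeroless: "P \<noteq> E P"
  shows "\<exists>p. P = ad p (E P) \<and> E p = Z \<and> p \<noteq> Z \<and> le (E P) p \<and> le p P"
proof -
  obtain p where P_eq: "P = ad p (E P)" and p_precise: "E p = Z"
    using precise_part_ex by blast
  have "le (E P) p"
  proof (rule ccontr)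
    assume "\<not> le (E P) p"
    then have "le (ad p (E P)) (ad (E P) (E P))"
      using order_total add_right_mono by blast
    then have "le P (E P)"
      using P_eq add_mag_self[OF mag_mag] by simp
    then show False
      using P_pos P_zeroless order_antisym by blast
  qed
  moreover have "le p P"
    using add_right_mono[OF zero_le_mag[of "E P"], of p] P_eq
    by (simp add: zero_add add_commute[of "E P" p])
  moreover have "p \<noteq> Z"
    using P_eq P_zeroless zero_add by auto
  ultimately show ?thesis
    using P_eq p_precise by blast
qed

lemma mag_mult_eq_mult_precise_part:
  assumes A_mag: "E A = A" and P_eq: "P = ad p (E P)" and p_precise: "E p = Z"
    and "le (E P) p" and "le p P"
  shows "mu A P = mu A p"
proof -
  have p_nonneg: "le Z p"
    using zero_le_mag[OF mag_mag] \<open>le (E P) p\<close> order_trans by blast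
  have "le (mu A (E P)) (mu A p)"
    using mag_mult_left_mono[of "E P" p A] \<open>le (E P) p\<close> order_refl A_mag by simp
  then have absorbed: "ad (mu A p) (mu A (E P)) = mu A p"
    using mag_le_iff mag_mult_mag A_mag add_commute by simp
  have "mu A p = ad (ad (mu A P) (mu A p)) (mu A (E P))"
    using distrib[of A p "E P"] P_eq[symmetric] A_mag absorbed by simp
  also have "\<dots> = ad (mu A P) (mu A p)"
    using add_assoc absorbed by simp
  finally have "le (mu A P) (mu A p)"
    using mag_le_iff mag_mult_mag A_mag by simp
  moreover have "le (mu A p) (mu A P)"
    using mag_mult_left_mono[of p P A] p_precise p_nonneg \<open>le p P\<close> A_mag by simp
  ultimately show ?thesis
    using order_antisym by blast
qed

lemma mag_mult_cancel_precise:
  assumes A_mag: "E A = A" and B_mag: "E B = B"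
    and p_precise: "E p = Z" and "p \<noteq> Z" and "le Z p"
    and le_mult: "le (mu A p) (mu B p)"
  shows "le A B"
proof -
  define q where "q = I p"
  have pq: "mu p q = one_s"
    unfolding q_def using inverse_precise_nonneg assms by blast
  have q_zeroless: "q \<noteq> E q"
  proof
    assume "q = E q"
    then have "E one_s = one_s"
      using pq mag_mult_mag'[of q p] by simp
    then show False
      using one_not_mag by simp
  qed
  have cancel: "mu q (mu M p) = M" for M
  proof -
    have "mu q (mu M p) = mu M (mu p q)"
      using mult_assoc mult_commute by metis
    then show ?thesis
      using pq mult_one by simp
  qed
  show ?thesis
  proof (cases "le (E q) q")
    case True
    then show ?thesis
      using mult_left_mono[of q "mu A p" "mu B p"] q_zeroless le_mult cancel by simp
  next
    case False
    then have "le (E (N q)) (N q)"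
      using order_total neg_nonneg_if_nonpos by blast
    moreover have "E (N q) \<noteq> N q"
      using neg_zeroless[OF q_zeroless] by simp
    ultimately have "le (mu (N q) (mu A p)) (mu (N q) (mu B p))"
      using mult_left_mono le_mult by blast
    then show ?thesis
      using neg_mult[symmetric] cancel neg_mag_eq A_mag B_mag by simp
  qed
qed

lemma mag_mult_cancel:
  assumes "E A = A" and "E B = B" and "P \<noteq> E P" and "le (E P) P"
    and "le (mu A P) (mu B P)"
  shows "le A B"
proof -
  obtain p where P_eq: "P = ad p (E P)" and p_precise: "E p = Z" and "p \<noteq> Z"
    and mag_le_p: "le (E P) p" and p_le: "le p P"
    using positive_precise_part assms(3,4) by blast
  have "le Z p"
    using zero_le_mag[OF mag_mag] mag_le_p order_trans by blast
  moreover have "mu A P = mu A p" and "mu B P = mu B p"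
    using mag_mult_eq_mult_precise_part[OF _ P_eq p_precise mag_le_p p_le] assms(1,2) by blast+
  ultimately show ?thesis
    using mag_mult_cancel_precise[OF assms(1,2) p_precise \<open>p \<noteq> Z\<close>] assms(5) by simp
qed

definition abs_s :: "'a \<Rightarrow> 'a" where
  "abs_s x = (if le (E x) x then x else N x)"

lemma abs_s_positive: "le (E (abs_s x)) (abs_s x)"
  unfolding abs_s_def using order_total neg_nonneg_if_nonpos by auto

lemma abs_s_zeroless: "x \<noteq> E x \<Longrightarrow> abs_s x \<noteq> E (abs_s x)"
  unfolding abs_s_def using neg_zeroless by simp

lemma mag_mult_abs_s: "E m = m \<Longrightarrow> mu m (abs_s x) = mu m x"
  unfolding abs_s_def by (simp add: mult_neg neg_mag_eq mag_mult_mag)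

lemma relunc_mult_self: "x \<noteq> E x \<Longrightarrow> mu (E (U x)) x = E x"
proof -
  assume zeroless: "x \<noteq> E x"
  have "mu (E (U x)) x = mu (E x) (U x)"
    using mag_unit[OF zeroless] mult_inverse[OF zeroless] by (simp add: mult_assoc mult_commute[of "I x" x])
  moreover have "E x = ad (mu (E x) (U x)) (mu (E (U x)) x)"
    using mag_mult[of x "U x"] mult_unit[OF zeroless] by simp
  ultimately show ?thesis
    using add_mag_self mag_mult_mag[OF mag_mag] by simp
qed

lemma relunc_le_if_mag_mult_le:
  assumes x_zeroless: "x \<noteq> E x" and y_zeroless: "y \<noteq> E y"
    and le_mult: "le (mu (E x) y) (mu (E y) x)"
  shows "le (relunc ad mu x) (relunc ad mu y)"
proof -
  let ?X = "abs_s x" and ?Y = "abs_s y"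
  have "E x = mu (E (U x)) ?X"
    using relunc_mult_self[OF x_zeroless] mag_mult_abs_s[OF mag_mag] by simp
  then have "mu (E x) ?Y = mu (mu (E (U x)) ?Y) ?X"
    by (simp add: mult_assoc mult_commute[of ?X ?Y])
  moreover have "mu (E y) ?X = mu (E y) x" and "mu (E x) ?Y = mu (E x) y"
    using mag_mult_abs_s[OF mag_mag] by simp_all
  ultimately have "le (mu (mu (E (U x)) ?Y) ?X) (mu (E y) ?X)"
    using le_mult by simp
  then have "le (mu (E (U x)) ?Y) (E y)"
    using mag_mult_cancel[OF mag_mult_mag[OF mag_mag] mag_mag abs_s_zeroless[OF x_zeroless] abs_s_positive]
    by blast
  also have "E y = mu (E (U y)) ?Y"
    using relunc_mult_self[OF y_zeroless] mag_mult_abs_s[OF mag_mag] by simp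
  finally have "le (E (U x)) (E (U y))"
    using mag_mult_cancel[OF mag_mag mag_mag abs_s_zeroless[OF y_zeroless] abs_s_positive] by blast
  then show ?thesis
    unfolding relunc_def using x_zeroless y_zeroless by simp
qed

end

theorem mainTheorem8:
  fixes ad mu :: "'a \<Rightarrow> 'a \<Rightarrow> 'a" and le :: "'a \<Rightarrow> 'a \<Rightarrow> bool" and x y :: 'a
  assumes "solid ad mu le"
    and "x \<noteq> mag ad x" and "y \<noteq> mag ad y"
    and "le (mu (mag ad x) y) (mu (mag ad y) x)"
  shows "le (relunc ad mu x) (relunc ad mu y)"
proof -
  interpret solid_struct ad mu le
    using assms(1) by (rule solid_struct_if_solid)
  show ?thesis
    using relunc_le_if_mag_mult_le assms(2-4) .
qed

end
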